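(* Let $p_1,p_2,\dots$ be a sequence with $0\le p_j\le 1$ for all $j$, and let $I_1,I_2,\dots$ be independent Bernoulli random variables with $P(I_k=1)=p_k$. Put $q_k=1-p_k$, $r_k=p_k/q_k$ (with $r_k=\infty$ if $p_k=1$), and for $1\le k\le n$ let $R(1,n)=\sum_{j=1}^n r_j$. For each $n\ge1$ let $V(n)$ be the maximal probability, over all stopping times $\tau$ with respect to $\mathcal F_k=\sigma(I_1,\dots,I_k)$ taking values in $\{1,\dots,n\}$, that $I_\tau=1$ and $I_j=0$ for all $\tau<j\le n$. Let $$N^*=\sup\{n\in\mathbb N: R(1,n)\le 1\}\in\mathbb N\cup\{\infty\}.$$ Then $V(n)$ is non-decreasing in $n$ for $1\le n\le N^*$, i.e. $V(n)\le V(n+1)$ for every positive integer $n$ with $n+1\le N^*$.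
   Context: $V(n)$ is the optimal probability of stopping online (without recall) on the last index $k\le n$ with $I_k=1$ (the "$n$-problem"). *)

theory Defs
  imports "HOL-Probability.Probability" "HOL-Library.Extended_Nat" "HOL-Library.Extended_Real"
begin

text \<open>Outcomes are indicator sequences I :: nat => bool (I k = the k-th Bernoulli indicator,
  k >= 1). The joint law of I_1..I_n is the product of Bernoulli(p k) for k in {1..n}.\<close>

definition law :: "(nat \<Rightarrow> real) \<Rightarrow> nat \<Rightarrow> (nat \<Rightarrow> bool) pmf" where
  "law p n = Pi_pmf {1..n} False (\<lambda>k. bernoulli_pmf (p k))"

text \<open>Stopping times w.r.t. F_k = sigma(I_1..I_k) with values in {1..n}:
  the event {tau = k} is determined by I_1..I_k.\<close>

definition is_stopping_time :: "nat \<Rightarrow> ((nat \<Rightarrow> bool) \<Rightarrow> nat) \<Rightarrow> bool" where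
  "is_stopping_time n \<tau> \<longleftrightarrow>
     (\<forall>\<omega>. \<tau> \<omega> \<in> {1..n}) \<and>
     (\<forall>\<omega> \<omega>' k. \<tau> \<omega> = k \<and> (\<forall>j\<in>{1..k}. \<omega> j = \<omega>' j) \<longrightarrow> \<tau> \<omega>' = k)"

definition win_event :: "nat \<Rightarrow> ((nat \<Rightarrow> bool) \<Rightarrow> nat) \<Rightarrow> (nat \<Rightarrow> bool) set" where
  "win_event n \<tau> = {\<omega>. \<omega> (\<tau> \<omega>) \<and> (\<forall>j. \<tau> \<omega> < j \<and> j \<le> n \<longrightarrow> \<not> \<omega> j)}"

definition V :: "(nat \<Rightarrow> real) \<Rightarrow> nat \<Rightarrow> real" where
  "V p n = (SUP \<tau>\<in>{\<tau>. is_stopping_time n \<tau>}. measure_pmf.prob (law p n) (win_event n \<tau>))"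

definition odds :: "(nat \<Rightarrow> real) \<Rightarrow> nat \<Rightarrow> ereal" where
  "odds p k = (if p k = 1 then \<infinity> else ereal (p k / (1 - p k)))"

definition R :: "(nat \<Rightarrow> real) \<Rightarrow> nat \<Rightarrow> ereal" where
  "R p n = (\<Sum>j=1..n. odds p j)"

definition Nstar :: "(nat \<Rightarrow> real) \<Rightarrow> enat" where
  "Nstar p = Sup (enat ` {n. R p n \<le> 1})"

end

theory Submission
  imports Defs
begin

text \<open>While R(1, n) \<le> 1, Bruss' odds theorem gives V(n) = Q(1, n) R(1, n), where
  Q(a, n) is the product of the q j and R(a, n) the sum of the odds r j over a \<le> j \<le> n.
  Condition on I a: stopping at a success at a wins with probability Q(a+1, n), while by
  induction any continuation wins with probability at most Q(a+1, n) R(a+1, n) \<le> Q(a+1, n),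
  with equality for the rule that stops at the first success. Monotonicity is then the identity
  Q(1, n+1) R(1, n+1) - Q(1, n) R(1, n) = Q(1, n) p (n+1) (1 - R(1, n)) \<ge> 0.\<close>

lemma prob_bind_bernoulli_pmf:
  assumes "0 \<le> q" "q \<le> 1"
  shows "measure_pmf.prob (bernoulli_pmf q \<bind> N) X =
    q * measure_pmf.prob (N True) X + (1 - q) * measure_pmf.prob (N False) X"
proof -
  have "ennreal (measure_pmf.prob (bernoulli_pmf q \<bind> N) X) =
      ennreal (measure_pmf.prob (N True) X) * ennreal q +
      ennreal (measure_pmf.prob (N False) X) * ennreal (1 - q)"
    using assms by (simp add: measure_pmf.emeasure_eq_measure[symmetric])
  also have "\<dots> =
      ennreal (q * measure_pmf.prob (N True) X + (1 - q) * measure_pmf.prob (N False) X)"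
    using assms
    by (simp add: ennreal_mult'[symmetric] ennreal_plus[symmetric] mult.commute del: ennreal_plus)
  finally show ?thesis
    using assms by (simp add: ennreal_inj del: ennreal_plus)
qed

definition law_from :: "(nat \<Rightarrow> real) \<Rightarrow> nat \<Rightarrow> nat \<Rightarrow> (nat \<Rightarrow> bool) pmf" where
  "law_from p a n = Pi_pmf {a..n} False (\<lambda>k. bernoulli_pmf (p k))"

text \<open>The outcome seen from index a on, with I a = b and later indicators taken from \<omega>;
  indices below a are False, as on the support of law_from p a n.\<close>

definition with_first :: "nat \<Rightarrow> bool \<Rightarrow> (nat \<Rightarrow> bool) \<Rightarrow> nat \<Rightarrow> bool" where
  "with_first a b \<omega> = (\<lambda>j. if j < a then False else if j = a then b else \<omega> j)"

lemma law_from_eq_bind: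
  assumes "a \<le> n"
  shows "law_from p a n =
    bernoulli_pmf (p a) \<bind> (\<lambda>b. map_pmf (with_first a b) (law_from p (Suc a) n))"
proof -
  have "{a..n} = insert a {Suc a..n}" using assms by auto
  then have "law_from p a n =
      bernoulli_pmf (p a) \<bind> (\<lambda>b. map_pmf (\<lambda>\<omega>. fun_upd \<omega> a b) (law_from p (Suc a) n))"
    unfolding law_from_def by (simp add: Pi_pmf_insert' map_pmf_def)
  also have "\<dots> = bernoulli_pmf (p a) \<bind> (\<lambda>b. map_pmf (with_first a b) (law_from p (Suc a) n))"
  proof (intro bind_pmf_cong refl map_pmf_cong)
    fix b \<omega> assume "\<omega> \<in> set_pmf (law_from p (Suc a) n)"
    then have "\<forall>j. j \<notin> {Suc a..n} \<longrightarrow> \<not> \<omega> j"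
      using set_Pi_pmf_subset[of "{Suc a..n}" False] unfolding law_from_def by blast
    then show "fun_upd \<omega> a b = with_first a b \<omega>"
      by (auto simp: with_first_def fun_eq_iff)
  qed
  finally show ?thesis .
qed

lemma prob_law_from_first:
  assumes "a \<le> n" "0 \<le> p a" "p a \<le> 1"
  shows "measure_pmf.prob (law_from p a n) S =
    p a * measure_pmf.prob (law_from p (Suc a) n) (with_first a True -` S) +
    (1 - p a) * measure_pmf.prob (law_from p (Suc a) n) (with_first a False -` S)"
  using assms by (simp add: law_from_eq_bind prob_bind_bernoulli_pmf)

definition fail_prod :: "(nat \<Rightarrow> real) \<Rightarrow> nat \<Rightarrow> nat \<Rightarrow> real" where
  "fail_prod p a n = (\<Prod>j\<in>{a..n}. 1 - p j)"

definition odds_sum :: "(nat \<Rightarrow> real) \<Rightarrow> nat \<Rightarrow> nat \<Rightarrow> real" where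
  "odds_sum p a n = (\<Sum>j\<in>{a..n}. p j / (1 - p j))"

lemma fail_prod_first: "a \<le> n \<Longrightarrow> fail_prod p a n = (1 - p a) * fail_prod p (Suc a) n"
  unfolding fail_prod_def by (simp add: prod.atLeast_Suc_atMost)

lemma odds_sum_first: "a \<le> n \<Longrightarrow> odds_sum p a n = p a / (1 - p a) + odds_sum p (Suc a) n"
  unfolding odds_sum_def by (simp add: sum.atLeast_Suc_atMost)

lemma fail_prod_last:
  "a \<le> Suc n \<Longrightarrow> fail_prod p a (Suc n) = (1 - p (Suc n)) * fail_prod p a n"
  unfolding fail_prod_def by (simp add: prod.nat_ivl_Suc')

lemma odds_sum_last:
  "a \<le> Suc n \<Longrightarrow> odds_sum p a (Suc n) = p (Suc n) / (1 - p (Suc n)) + odds_sum p a n"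
  unfolding odds_sum_def by (simp add: sum.nat_ivl_Suc')

lemma fail_prod_mult_odds_sum_first:
  assumes "a \<le> n" "p a \<noteq> 1"
  shows "fail_prod p a n * odds_sum p a n =
    p a * fail_prod p (Suc a) n + (1 - p a) * (fail_prod p (Suc a) n * odds_sum p (Suc a) n)"
  using assms unfolding fail_prod_first[OF assms(1)] odds_sum_first[OF assms(1)]
  by (simp add: field_simps)

lemma fail_prod_nonneg: "p ` {a..n} \<subseteq> {0..1} \<Longrightarrow> 0 \<le> fail_prod p a n"
  unfolding fail_prod_def by (rule prod_nonneg) (auto simp: image_subset_iff)

lemma odds_sum_nonneg:
  assumes "p ` {a..n} \<subseteq> {0..<1}"
  shows "0 \<le> odds_sum p a n"
  unfolding odds_sum_def
proof (rule sum_nonneg)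
  fix j assume "j \<in> {a..n}"
  then have "p j \<in> {0..<1}" using assms by blast
  then show "0 \<le> p j / (1 - p j)" by simp
qed

lemma prob_no_success:
  assumes "p ` {a..n} \<subseteq> {0..1}"
  shows "measure_pmf.prob (law_from p a n) {\<omega>. \<forall>j\<in>{a..n}. \<not> \<omega> j} = fail_prod p a n"
proof -
  have "{\<omega>. \<forall>j\<in>{a..n}. \<not> \<omega> j} = Pi {a..n} (\<lambda>_. {False})" by (auto simp: Pi_def)
  then show ?thesis
    using assms unfolding law_from_def fail_prod_def
    by (simp add: measure_Pi_pmf_Pi measure_pmf_single image_subset_iff)
qed

definition stopping_time_from :: "nat \<Rightarrow> nat \<Rightarrow> ((nat \<Rightarrow> bool) \<Rightarrow> nat) \<Rightarrow> bool" where
  "stopping_time_from a n \<tau> \<longleftrightarrow> (\<forall>\<omega>. \<tau> \<omega> \<in> {a..n}) \<and>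
     (\<forall>\<omega> \<omega>' k. \<tau> \<omega> = k \<and> (\<forall>j\<in>{1..k}. \<omega> j = \<omega>' j) \<longrightarrow> \<tau> \<omega>' = k)"

lemma is_stopping_time_iff: "is_stopping_time n \<tau> \<longleftrightarrow> stopping_time_from 1 n \<tau>"
  unfolding is_stopping_time_def stopping_time_from_def ..

lemma stopping_time_from_range: "stopping_time_from a n \<tau> \<Longrightarrow> \<tau> \<omega> \<in> {a..n}"
  unfolding stopping_time_from_def by blast

lemma stopping_time_from_le: "stopping_time_from a n \<tau> \<Longrightarrow> a \<le> n"
  using stopping_time_from_range by fastforce

lemma stopping_time_from_stop_at_first:
  assumes "stopping_time_from a n \<tau>" "\<tau> (with_first a b \<omega>) = a"
  shows "\<tau> (with_first a b \<omega>') = a"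
proof -
  have "\<forall>j\<in>{1..a}. with_first a b \<omega> j = with_first a b \<omega>' j"
    by (simp add: with_first_def)
  then show ?thesis
    using assms unfolding stopping_time_from_def by blast
qed

lemma stopping_time_from_shift:
  assumes "stopping_time_from a n \<tau>" "\<And>\<omega>. \<tau> (with_first a b \<omega>) \<noteq> a"
  shows "stopping_time_from (Suc a) n (\<tau> \<circ> with_first a b)"
  unfolding stopping_time_from_def
proof (intro conjI allI impI)
  fix \<omega>
  show "(\<tau> \<circ> with_first a b) \<omega> \<in> {Suc a..n}"
    using stopping_time_from_range[OF assms(1), of "with_first a b \<omega>"] assms(2)[of \<omega>] by auto
next
  fix \<omega> \<omega>' k assume k: "(\<tau> \<circ> with_first a b) \<omega> = k \<and> (\<forall>j\<in>{1..k}. \<omega> j = \<omega>' j)"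
  then have "\<forall>j\<in>{1..k}. with_first a b \<omega> j = with_first a b \<omega>' j"
    by (simp add: with_first_def)
  then show "(\<tau> \<circ> with_first a b) \<omega>' = k"
    using k assms(1) unfolding stopping_time_from_def comp_apply by blast
qed

lemma prob_vimage_win_event_stop:
  assumes "\<And>\<omega>. \<tau> (with_first a b \<omega>) = a" "p ` {Suc a..n} \<subseteq> {0..1}"
  shows "measure_pmf.prob (law_from p (Suc a) n) (with_first a b -` win_event n \<tau>) =
    (if b then fail_prod p (Suc a) n else 0)"
proof -
  have "with_first a b -` win_event n \<tau> = (if b then {\<omega>. \<forall>j\<in>{Suc a..n}. \<not> \<omega> j} else {})"
    using assms(1) by (auto simp: win_event_def with_first_def)
  then show ?thesis using prob_no_success[OF assms(2)] by simp
qed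

lemma vimage_win_event_continue:
  assumes "\<And>\<omega>. a < \<tau> (with_first a b \<omega>)"
  shows "with_first a b -` win_event n \<tau> = win_event n (\<tau> \<circ> with_first a b)"
proof (intro set_eqI)
  fix \<omega>
  have agree: "with_first a b \<omega> j = \<omega> j" if "\<tau> (with_first a b \<omega>) \<le> j" for j
    using assms[of \<omega>] that by (simp add: with_first_def)
  show "\<omega> \<in> with_first a b -` win_event n \<tau> \<longleftrightarrow> \<omega> \<in> win_event n (\<tau> \<circ> with_first a b)"
    unfolding win_event_def using agree by (auto simp: less_imp_le)
qed

theorem prob_win_event_le:
  assumes "stopping_time_from a n \<tau>" "p ` {a..n} \<subseteq> {0..<1}" "odds_sum p a n \<le> 1"
  shows "measure_pmf.prob (law_from p a n) (win_event n \<tau>) \<le> fail_prod p a n * odds_sum p a n"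
proof -
  have "a \<le> Suc n" using stopping_time_from_le[OF assms(1)] by simp
  then show ?thesis
    using assms
  proof (induction a arbitrary: \<tau> rule: inc_induct)
    case base
    then show ?case using stopping_time_from_le by fastforce
  next
    case (step a)
    define Q' R' where "Q' = fail_prod p (Suc a) n" and "R' = odds_sum p (Suc a) n"
    have an: "a \<le> n" using step.hyps by simp
    have pa: "0 \<le> p a" "p a < 1" using step.prems(2) an by (auto simp: image_subset_iff)
    have tail: "p ` {Suc a..n} \<subseteq> {0..<1}" using step.prems(2) by auto
    then have tail_le: "p ` {Suc a..n} \<subseteq> {0..1}" by fastforce
    have "0 \<le> p a / (1 - p a)" using pa by simp
    then have "R' \<le> 1"
      using step.prems(3) odds_sum_first[OF an, of p] unfolding R'_def by linarith
    moreover have "0 \<le> Q'" unfolding Q'_def using tail_le by (rule fail_prod_nonneg)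
    moreover have "0 \<le> R'" unfolding R'_def using tail by (rule odds_sum_nonneg)
    ultimately have "0 \<le> Q' * R'" "Q' * R' \<le> Q'" by (simp_all add: mult_left_le)
    have branch: "measure_pmf.prob (law_from p (Suc a) n) (with_first a b -` win_event n \<tau>)
        \<le> (if b then Q' else Q' * R')" for b
    proof (cases "\<exists>\<omega>. \<tau> (with_first a b \<omega>) = a")
      case True
      then have "\<And>\<omega>. \<tau> (with_first a b \<omega>) = a"
        using stopping_time_from_stop_at_first[OF step.prems(1)] by blast
      from prob_vimage_win_event_stop[of \<tau> a b p n, OF this tail_le] show ?thesis
        using \<open>0 \<le> Q' * R'\<close> unfolding Q'_def by simp
    next
      case False
      then have shifted: "stopping_time_from (Suc a) n (\<tau> \<circ> with_first a b)"
        using stopping_time_from_shift[OF step.prems(1)] by blast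
      have "a < \<tau> (with_first a b \<omega>)" for \<omega>
        using stopping_time_from_range[OF shifted, of \<omega>] by simp
      then have "with_first a b -` win_event n \<tau> = win_event n (\<tau> \<circ> with_first a b)"
        by (rule vimage_win_event_continue)
      then have "measure_pmf.prob (law_from p (Suc a) n) (with_first a b -` win_event n \<tau>) \<le> Q' * R'"
        using step.IH[OF shifted tail \<open>R' \<le> 1\<close>[unfolded R'_def]]
        unfolding Q'_def R'_def by (simp add: comp_def)
      then show ?thesis using \<open>Q' * R' \<le> Q'\<close> by auto
    qed
    have "measure_pmf.prob (law_from p a n) (win_event n \<tau>) \<le> p a * Q' + (1 - p a) * (Q' * R')"
      unfolding prob_law_from_first[of a n p, OF an pa(1) less_imp_le[OF pa(2)]]
      using branch[of True] branch[of False] pa by (intro add_mono mult_left_mono) auto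
    also have "\<dots> = fail_prod p a n * odds_sum p a n"
      using fail_prod_mult_odds_sum_first[of a n p] an pa unfolding Q'_def R'_def by simp
    finally show ?case .
  qed
qed

definition first_success :: "nat \<Rightarrow> nat \<Rightarrow> (nat \<Rightarrow> bool) \<Rightarrow> nat" where
  "first_success a n \<omega> = (if \<exists>j\<in>{a..n}. \<omega> j then Min {j\<in>{a..n}. \<omega> j} else n)"

lemma first_success_eq_iff:
  assumes "a \<le> n"
  shows "first_success a n \<omega> = k \<longleftrightarrow> k \<in> {a..n} \<and> (\<forall>j\<in>{a..<k}. \<not> \<omega> j) \<and> (\<omega> k \<or> k = n)"
    (is "_ \<longleftrightarrow> ?first k")
proof (cases "\<exists>j\<in>{a..n}. \<omega> j")
  case True
  define S where "S = {j\<in>{a..n}. \<omega> j}"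
  have "finite S" "S \<noteq> {}" using True unfolding S_def by auto
  then have m_in: "Min S \<in> S" and m_le: "\<And>j. j \<in> S \<Longrightarrow> Min S \<le> j"
    by (simp_all add: Min_in)
  have "Min S = k \<longleftrightarrow> ?first k"
  proof
    assume "Min S = k"
    then have k_in: "k \<in> S" and k_le: "\<And>j. j \<in> S \<Longrightarrow> k \<le> j" using m_in m_le by auto
    have "\<not> \<omega> j" if "j \<in> {a..<k}" for j
      using that k_in k_le[of j] unfolding S_def by auto
    then show "?first k" using k_in unfolding S_def by auto
  next
    assume first: "?first k"
    have "k \<le> Min S"
    proof (rule ccontr)
      assume "\<not> k \<le> Min S"
      then have "Min S \<in> {a..<k}" using m_in unfolding S_def by auto
      then show False using first m_in unfolding S_def by auto
    qed
    moreover have "Min S \<le> k" using first m_in m_le unfolding S_def by auto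
    ultimately show "Min S = k" by simp
  qed
  then show ?thesis using True unfolding first_success_def S_def by simp
next
  case False
  then show ?thesis using assms unfolding first_success_def by auto
qed

lemma first_success_range: "a \<le> n \<Longrightarrow> first_success a n \<omega> \<in> {a..n}"
  using first_success_eq_iff by blast

lemma stopping_time_from_first_success:
  assumes "1 \<le> a" "a \<le> n"
  shows "stopping_time_from a n (first_success a n)"
  unfolding stopping_time_from_def
proof (intro conjI allI impI)
  fix \<omega> show "first_success a n \<omega> \<in> {a..n}" using assms(2) by (rule first_success_range)
next
  fix \<omega> \<omega>' k assume "first_success a n \<omega> = k \<and> (\<forall>j\<in>{1..k}. \<omega> j = \<omega>' j)"
  then show "first_success a n \<omega>' = k"
    using assms(1) unfolding first_success_eq_iff[OF assms(2)] by auto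
qed

lemma first_success_with_first_True: "a \<le> n \<Longrightarrow> first_success a n (with_first a True \<omega>) = a"
  by (simp add: first_success_eq_iff with_first_def)

lemma first_success_with_first_False:
  assumes "a < n"
  shows "first_success a n \<circ> with_first a False = first_success (Suc a) n"
proof
  fix \<omega>
  define k where "k = first_success (Suc a) n \<omega>"
  then have "k \<in> {Suc a..n} \<and> (\<forall>j\<in>{Suc a..<k}. \<not> \<omega> j) \<and> (\<omega> k \<or> k = n)"
    using first_success_eq_iff[of "Suc a" n \<omega> k] assms by simp
  then have "first_success a n (with_first a False \<omega>) = k"
    using assms by (subst first_success_eq_iff) (auto simp: with_first_def)
  then show "(first_success a n \<circ> with_first a False) \<omega> = first_success (Suc a) n \<omega>"
    by (simp add: k_def)
qed

theorem prob_win_event_first_success: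
  assumes "a \<le> n" "p ` {a..n} \<subseteq> {0..<1}"
  shows "measure_pmf.prob (law_from p a n) (win_event n (first_success a n)) =
    fail_prod p a n * odds_sum p a n"
proof -
  have "a \<le> Suc n" using assms(1) by simp
  then show ?thesis
    using assms
  proof (induction a rule: inc_induct)
    case base
    then show ?case by simp
  next
    case (step a)
    define Q' R' where "Q' = fail_prod p (Suc a) n" and "R' = odds_sum p (Suc a) n"
    let ?W = "win_event n (first_success a n)"
    have pa: "0 \<le> p a" "p a < 1" using step.prems by (auto simp: image_subset_iff)
    have tail: "p ` {Suc a..n} \<subseteq> {0..<1}" using step.prems(2) by auto
    then have tail_le: "p ` {Suc a..n} \<subseteq> {0..1}" by fastforce
    have "first_success a n (with_first a True \<omega>) = a" for \<omega>
      using step.prems(1) by (rule first_success_with_first_True)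
    from prob_vimage_win_event_stop[of "first_success a n" a True p n, OF this tail_le]
    have success: "measure_pmf.prob (law_from p (Suc a) n) (with_first a True -` ?W) = Q'"
      unfolding Q'_def by simp
    have failure: "measure_pmf.prob (law_from p (Suc a) n) (with_first a False -` ?W) = Q' * R'"
    proof (cases "a = n")
      case True
      then have "first_success a n (with_first a False \<omega>) = a" for \<omega>
        using first_success_eq_iff[of a n _ a] by simp
      from prob_vimage_win_event_stop[of "first_success a n" a False p n, OF this tail_le]
      show ?thesis unfolding R'_def odds_sum_def using True by simp
    next
      case False
      then have an: "a < n" using step.prems(1) by simp
      have "a < first_success a n (with_first a False \<omega>)" for \<omega>
        using first_success_range[of "Suc a" n \<omega>] an
          fun_cong[OF first_success_with_first_False[OF an], of \<omega>] by simp
      then have "with_first a False -` ?W = win_event n (first_success (Suc a) n)"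
        by (simp add: vimage_win_event_continue first_success_with_first_False[OF an])
      then show ?thesis
        using step.IH an tail unfolding Q'_def R'_def by simp
    qed
    have "measure_pmf.prob (law_from p a n) ?W = p a * Q' + (1 - p a) * (Q' * R')"
      using prob_law_from_first[of a n p] step.prems(1) pa success failure by simp
    also have "\<dots> = fail_prod p a n * odds_sum p a n"
      using fail_prod_mult_odds_sum_first[of a n p] step.prems(1) pa unfolding Q'_def R'_def by simp
    finally show ?case .
  qed
qed

theorem V_eq_fail_prod_odds_sum:
  assumes "1 \<le> n" "p ` {1..n} \<subseteq> {0..<1}" "odds_sum p 1 n \<le> 1"
  shows "V p n = fail_prod p 1 n * odds_sum p 1 n"
proof -
  let ?win = "\<lambda>\<tau>. measure_pmf.prob (law p n) (win_event n \<tau>)"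
  have law: "law p n = law_from p 1 n" unfolding law_def law_from_def ..
  have optimal: "is_stopping_time n (first_success 1 n)"
    unfolding is_stopping_time_iff using assms(1) by (rule stopping_time_from_first_success[OF order_refl])
  have "(SUP \<tau>\<in>{\<tau>. is_stopping_time n \<tau>}. ?win \<tau>) \<le> fail_prod p 1 n * odds_sum p 1 n"
  proof (rule cSUP_least)
    show "{\<tau>. is_stopping_time n \<tau>} \<noteq> {}" using optimal by blast
  next
    fix \<tau> assume "\<tau> \<in> {\<tau>. is_stopping_time n \<tau>}"
    then show "?win \<tau> \<le> fail_prod p 1 n * odds_sum p 1 n"
      unfolding law using assms(2,3) by (auto intro: prob_win_event_le simp: is_stopping_time_iff)
  qed
  moreover have "fail_prod p 1 n * odds_sum p 1 n \<le> (SUP \<tau>\<in>{\<tau>. is_stopping_time n \<tau>}. ?win \<tau>)"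
  proof -
    have "fail_prod p 1 n * odds_sum p 1 n = ?win (first_success 1 n)"
      unfolding law using prob_win_event_first_success[OF assms(1,2)] by simp
    also have "\<dots> \<le> (SUP \<tau>\<in>{\<tau>. is_stopping_time n \<tau>}. ?win \<tau>)"
      using optimal by (intro cSUP_upper bdd_aboveI[of _ 1]) auto
    finally show ?thesis .
  qed
  ultimately show ?thesis unfolding V_def by (rule antisym)
qed

lemma fail_prod_odds_sum_mono:
  assumes "a \<le> Suc n" "p (Suc n) \<in> {0..<1}" "p ` {a..n} \<subseteq> {0..1}" "odds_sum p a n \<le> 1"
  shows "fail_prod p a n * odds_sum p a n \<le> fail_prod p a (Suc n) * odds_sum p a (Suc n)"
proof -
  have "fail_prod p a (Suc n) * odds_sum p a (Suc n) - fail_prod p a n * odds_sum p a n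
      = fail_prod p a n * (p (Suc n) * (1 - odds_sum p a n))"
    using assms(2) unfolding fail_prod_last[OF assms(1)] odds_sum_last[OF assms(1)]
    by (simp add: field_simps)
  also have "\<dots> \<ge> 0"
    using fail_prod_nonneg[OF assms(3)] assms(2,4) by simp
  finally show ?thesis by simp
qed

lemma odds_nonneg: "p j \<in> {0..1} \<Longrightarrow> 0 \<le> odds p j"
  unfolding odds_def by auto

lemma R_mono:
  assumes "\<And>j. p j \<in> {0..1}" "m \<le> k"
  shows "R p m \<le> R p k"
  unfolding R_def using assms by (intro sum_mono2) (auto intro: odds_nonneg)

lemma R_le_one_if_le_Nstar:
  assumes "\<And>j. p j \<in> {0..1}" "enat m \<le> Nstar p"
  shows "R p m \<le> 1"
proof (cases m)
  case 0
  then show ?thesis by (simp add: R_def)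
next
  case (Suc m')
  then have "enat m' < enat m" by simp
  then have "enat m' < Sup (enat ` {n. R p n \<le> 1})"
    using assms(2) unfolding Nstar_def by (rule less_le_trans)
  then obtain k where "R p k \<le> 1" "m' < k"
    unfolding less_Sup_iff by auto
  moreover have "R p m \<le> R p k"
    using assms(1) \<open>m' < k\<close> Suc by (intro R_mono) auto
  ultimately show ?thesis by simp
qed

lemma R_le_oneD:
  assumes "\<And>j. p j \<in> {0..1}" "R p m \<le> 1"
  shows "p ` {1..m} \<subseteq> {0..<1}" and "odds_sum p 1 m \<le> 1"
proof -
  have lt_one: "p j < 1" if "j \<in> {1..m}" for j
  proof -
    have "sum (odds p) {j} \<le> R p m"
      unfolding R_def using assms(1) that by (intro sum_mono2) (auto intro: odds_nonneg)
    then have "odds p j \<noteq> \<infinity>" using assms(2) by auto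
    then show ?thesis using assms(1)[of j] unfolding odds_def by (auto split: if_splits)
  qed
  then show "p ` {1..m} \<subseteq> {0..<1}" using assms(1) by fastforce
  have "R p m = ereal (odds_sum p 1 m)"
    unfolding R_def odds_sum_def sum_ereal[symmetric]
    by (intro sum.cong refl) (simp add: odds_def less_imp_neq[OF lt_one])
  then show "odds_sum p 1 m \<le> 1" using assms(2) by simp
qed

lemma odds_sum_le_last:
  assumes "a \<le> Suc n" "p (Suc n) \<in> {0..<1}"
  shows "odds_sum p a n \<le> odds_sum p a (Suc n)"
  using assms(2) unfolding odds_sum_last[OF assms(1)] by simp

theorem lemma3p1:
  fixes p :: "nat \<Rightarrow> real" and n :: nat
  assumes "\<And>j. 0 \<le> p j \<and> p j \<le> 1"
    and "n \<ge> 1"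
    and "enat (n + 1) \<le> Nstar p"
  shows "V p n \<le> V p (n + 1)"
proof -
  have probs: "\<And>j. p j \<in> {0..1}" using assms(1) by simp
  have "R p (Suc n) \<le> 1" using R_le_one_if_le_Nstar[OF probs] assms(3) by simp
  then have below_one: "p ` {1..Suc n} \<subseteq> {0..<1}" and odds_Suc: "odds_sum p 1 (Suc n) \<le> 1"
    using R_le_oneD[of p, OF probs] by blast+
  then have last: "p (Suc n) \<in> {0..<1}" by (auto simp: image_subset_iff)
  then have odds_n: "odds_sum p 1 n \<le> 1" using odds_sum_le_last[of 1 n p] odds_Suc by simp
  have "V p n = fail_prod p 1 n * odds_sum p 1 n"
    using assms(2) below_one odds_n by (intro V_eq_fail_prod_odds_sum) auto
  also have "\<dots> \<le> fail_prod p 1 (Suc n) * odds_sum p 1 (Suc n)"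
    using last probs odds_n by (intro fail_prod_odds_sum_mono) auto
  also have "\<dots> = V p (n + 1)"
    using below_one odds_Suc by (simp add: V_eq_fail_prod_odds_sum)
  finally show ?thesis .
qed

end
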